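(* There exist two non-isomorphic simple graphs $G_1$ and $G_2$, each on $8$ vertices, such that $P(G_1;x,\lambda)=P(G_2;x,\lambda)$. Consequently, the bivariate permanent polynomial is not a graph characterising polynomial.
   Context: All graphs are finite, simple and undirected. For a graph $G$ on $n$ vertices, let $A$ be its adjacency matrix and $\bar A$ the adjacency matrix of its complement $\bar G$, both with respect to the same vertex ordering. The permanent of an $n\times n$ matrix $M=(m_{ij})$ is $\mathrm{per}(M)=\sum_{\sigma\in S_n}\prod_{i=1}^n m_{i\sigma(i)}$. The bivariate permanent polynomial of $G$ is $P(G;x,\lambda)=\mathrm{per}(xI_n+\lambda A+\bar A)\in\mathbb{Z}[x,\lambda]$, where $I_n$ is the $n\times n$ identity matrix. A graph polynomial is called graph characterising if any two graphs with the same polynomial are isomorphic. *)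

theory Defs
  imports "HOL-Combinatorics.Permutations" "HOL-Computational_Algebra.Polynomial"
begin

definition simple_graph :: "nat \<Rightarrow> (nat \<Rightarrow> nat \<Rightarrow> bool) \<Rightarrow> bool" where
  "simple_graph n E \<longleftrightarrow>
     (\<forall>i j. E i j \<longrightarrow> i < n \<and> j < n) \<and>
     (\<forall>i j. E i j \<longrightarrow> E j i) \<and>
     (\<forall>i. \<not> E i i)"

definition graph_iso :: "nat \<Rightarrow> (nat \<Rightarrow> nat \<Rightarrow> bool) \<Rightarrow> (nat \<Rightarrow> nat \<Rightarrow> bool) \<Rightarrow> bool" where
  "graph_iso n E1 E2 \<longleftrightarrow>
     (\<exists>f. bij_betw f {..<n} {..<n} \<and>
          (\<forall>i<n. \<forall>j<n. E1 i j \<longleftrightarrow> E2 (f i) (f j)))"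

definition per :: "nat \<Rightarrow> (nat \<Rightarrow> nat \<Rightarrow> 'a::comm_semiring_1) \<Rightarrow> 'a" where
  "per n M = (\<Sum>\<sigma>\<in>{\<sigma>. \<sigma> permutes {..<n}}. \<Prod>i<n. M i (\<sigma> i))"

text \<open>Bivariate polynomials Z[x,lambda] are represented as int poly poly:
  polynomials in lambda (outer) with coefficients in Z[x] (inner).\<close>
definition var_x :: "int poly poly" where "var_x = [:[:0, 1:]:]"
definition var_lambda :: "int poly poly" where "var_lambda = [:0, 1:]"

definition ind :: "bool \<Rightarrow> int poly poly" where "ind b = (if b then 1 else 0)"

definition perm_poly :: "nat \<Rightarrow> (nat \<Rightarrow> nat \<Rightarrow> bool) \<Rightarrow> int poly poly" where
  "perm_poly n E = per n (\<lambda>i j. var_x * ind (i = j) + var_lambda * ind (E i j)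
                                 + ind (i \<noteq> j \<and> \<not> E i j))"

end

theory Submission
  imports Defs "HOL-Combinatorics.Multiset_Permutations"
begin

text \<open>They are not isomorphic: in the second,
  vertex 2 has degree 2 and both of its neighbours have degree 5, whereas in the first every
  vertex of degree 2 has a neighbour of degree other than 5.

  The permanent of \<open>M\<close> is the coefficient of \<open>y\<^sub>0 \<cdots> y\<^sub>n\<^sub>-\<^sub>1\<close>
  in \<open>\<Prod>\<^sub>i \<Sum>\<^sub>j M\<^sub>i\<^sub>j y\<^sub>j\<close>, computed in the algebra where \<open>y\<^sub>j\<^sup>2 = 0\<close>. Multiplying
  the linear factors in one at a time is a dynamic programme over the \<open>2\<^sup>n\<close> column subsets
  instead of a sum over the \<open>n!\<close> permutations.\<close>

definition per_minor :: "(nat \<Rightarrow> nat \<Rightarrow> 'a::comm_semiring_1) \<Rightarrow> nat \<Rightarrow> nat set \<Rightarrow> 'a" where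
  "per_minor M k C = (\<Sum>xs\<in>permutations_of_set C. \<Prod>i<length xs. M (k + i) (xs!i))"

lemma per_minor_empty: "per_minor M k {} = 1"
  by (simp add: per_minor_def)

lemma per_minor_expand_row:
  assumes "finite C" "C \<noteq> {}"
  shows "per_minor M k C = (\<Sum>c\<in>C. M k c * per_minor M (Suc k) (C - {c}))"
proof -
  have "per_minor M k C =
      (\<Sum>c\<in>C. \<Sum>xs\<in>(#) c ` permutations_of_set (C - {c}). \<Prod>i<length xs. M (k + i) (xs ! i))"
    unfolding per_minor_def permutations_of_set_nonempty[OF assms(2)]
    by (rule sum.UNION_disjoint) (auto simp: assms)
  also have "\<dots> = (\<Sum>c\<in>C. M k c * per_minor M (Suc k) (C - {c}))"
    by (intro sum.cong refl)
      (simp add: per_minor_def sum.reindex inj_on_def prod.lessThan_Suc_shift sum_distrib_left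
        del: prod.lessThan_Suc)
  finally show ?thesis .
qed

lemma per_minor_expand_row_if_card:
  assumes "finite S"
  shows "(\<Sum>c\<in>S. M k c * (if card (S - {c}) = m then per_minor M (Suc k) (S - {c}) else 0)) =
    (if card S = Suc m then per_minor M k S else 0)"
proof (cases "card S = Suc m")
  case True
  then have "S \<noteq> {}" by auto
  with True assms show ?thesis
    by (simp add: per_minor_expand_row cong: sum.cong)
next
  case False
  then have "card (S - {c}) \<noteq> m" if "c \<in> S" for c
    using that assms card_gt_0_iff[of S] by (auto simp: card_Diff_singleton)
  then show ?thesis using False by simp
qed

lemma map_permutes_in_permutations_of_set:
  assumes "\<sigma> permutes {..<n}"
  shows "map \<sigma> [0..<n] \<in> permutations_of_set {..<n}"
proof (rule permutations_of_setI)
  show "set (map \<sigma> [0..<n]) = {..<n}"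
    using permutes_image[OF assms] by (simp add: atLeast0LessThan)
  show "distinct (map \<sigma> [0..<n])"
    using permutes_inj_on[OF assms] by (simp add: distinct_map atLeast0LessThan)
qed

lemma nth_extension_permutes:
  assumes "xs \<in> permutations_of_set {..<n}"
  shows "(\<lambda>i. if i < n then xs ! i else i) permutes {..<n}"
proof -
  have len: "length xs = n"
    using length_finite_permutations_of_set[OF assms] by simp
  have "inj_on (\<lambda>i. if i < n then xs ! i else i) {..<n}"
    using permutations_of_setD(2)[OF assms] len by (auto simp: inj_on_def nth_eq_iff_index_eq)
  moreover have "(\<lambda>i. if i < n then xs ! i else i) ` {..<n} = {..<n}"
    using permutations_of_setD(1)[OF assms] len by (auto simp: set_conv_nth)
  ultimately show ?thesis
    by (auto intro!: bij_imp_permutes bij_betw_imageI)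
qed

lemma per_eq_per_minor: "per n M = per_minor M 0 {..<n}"
proof -
  have "per n M = (\<Sum>xs\<in>permutations_of_set {..<n}. \<Prod>i<n. M i (xs ! i))"
    unfolding per_def
  proof (rule sum.reindex_bij_witness[where i = "\<lambda>xs i. if i < n then xs ! i else i"
        and j = "\<lambda>\<sigma>. map \<sigma> [0..<n]"])
    fix \<sigma> assume "\<sigma> \<in> {\<sigma>. \<sigma> permutes {..<n}}"
    then have \<sigma>: "\<sigma> permutes {..<n}" by simp
    show "(\<lambda>i. if i < n then map \<sigma> [0..<n] ! i else i) = \<sigma>"
      using permutes_not_in[OF \<sigma>] by (auto simp: fun_eq_iff)
    show "map \<sigma> [0..<n] \<in> permutations_of_set {..<n}"
      using \<sigma> by (rule map_permutes_in_permutations_of_set)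
    show "(\<Prod>i<n. M i (map \<sigma> [0..<n] ! i)) = (\<Prod>i<n. M i (\<sigma> i))"
      by simp
  next
    fix xs assume xs: "xs \<in> permutations_of_set {..<n}"
    then show "map (\<lambda>i. if i < n then xs ! i else i) [0..<n] = xs"
      by (intro nth_equalityI) (simp_all add: length_finite_permutations_of_set)
    show "(\<lambda>i. if i < n then xs ! i else i) \<in> {\<sigma>. \<sigma> permutes {..<n}}"
      using xs by (simp add: nth_extension_permutes)
  qed
  also have "\<dots> = per_minor M 0 {..<n}"
    unfolding per_minor_def by (intro sum.cong) (simp_all add: length_finite_permutations_of_set)
  finally show ?thesis .
qed

text \<open>A \<open>subset_trie\<close> represents an element of the algebra above: \<open>Node L R\<close> at depth \<open>j\<close> stands
  for \<open>L + y\<^sub>j R\<close> and \<open>Leaf v\<close> for the constant \<open>v\<close>, so that \<open>trie_lookup t bs\<close> is the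
  coefficient of the monomial whose exponents are the bits \<open>bs\<close>.\<close>

datatype 'a subset_trie = Leaf 'a | Node "'a subset_trie" "'a subset_trie"

fun trie_lookup :: "'a::zero subset_trie \<Rightarrow> bool list \<Rightarrow> 'a" where
  "trie_lookup (Leaf v) bs = (if True \<in> set bs then 0 else v)"
| "trie_lookup (Node L R) [] = trie_lookup L []"
| "trie_lookup (Node L R) (b # bs) = trie_lookup (if b then R else L) bs"

fun trie_scale :: "'a::times \<Rightarrow> 'a subset_trie \<Rightarrow> 'a subset_trie" where
  "trie_scale c (Leaf v) = Leaf (c * v)"
| "trie_scale c (Node L R) = Node (trie_scale c L) (trie_scale c R)"

fun trie_add :: "'a::plus subset_trie \<Rightarrow> 'a subset_trie \<Rightarrow> 'a subset_trie" where
  "trie_add (Leaf a) (Leaf b) = Leaf (a + b)"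
| "trie_add (Leaf a) (Node L R) = Node (trie_add (Leaf a) L) R"
| "trie_add (Node L R) (Leaf b) = Node (trie_add L (Leaf b)) R"
| "trie_add (Node L R) (Node L' R') = Node (trie_add L L') (trie_add R R')"

fun trie_mult_linear :: "'a::comm_semiring_1 list \<Rightarrow> 'a subset_trie \<Rightarrow> 'a subset_trie" where
  "trie_mult_linear [] t = Leaf 0"
| "trie_mult_linear (c # cs) (Leaf v) = Node (trie_mult_linear cs (Leaf v)) (Leaf (c * v))"
| "trie_mult_linear (c # cs) (Node L R) =
     Node (trie_mult_linear cs L) (trie_add (trie_scale c L) (trie_mult_linear cs R))"

lemma trie_lookup_Node:
  "trie_lookup (Node L R) bs =
     (case bs of [] \<Rightarrow> trie_lookup L [] | b # bs' \<Rightarrow> trie_lookup (if b then R else L) bs')"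
  by (cases bs) simp_all

lemma trie_lookup_scale:
  "trie_lookup (trie_scale c t) bs = (c::'a::mult_zero) * trie_lookup t bs"
  by (induction t arbitrary: bs) (auto simp: trie_lookup_Node split: list.split)

lemma trie_lookup_add:
  "trie_lookup (trie_add s t) bs = trie_lookup s bs + trie_lookup (t::'a::monoid_add subset_trie) bs"
  by (induction s t arbitrary: bs rule: trie_add.induct)
    (auto simp: trie_lookup_Node split: list.split)

lemma trie_lookup_mult_linear:
  "trie_lookup (trie_mult_linear cs t) bs =
     (\<Sum>i<length cs.
        if i < length bs \<and> bs ! i then cs ! i * trie_lookup t (bs[i := False]) else 0)"
proof (induction cs t arbitrary: bs rule: trie_mult_linear.induct)
  case (1 t)
  then show ?case by simp
next
  case (2 c cs v)
  then show ?case
    by (cases bs) (auto simp: sum.lessThan_Suc_shift simp del: sum.lessThan_Suc cong: if_cong)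
next
  case (3 c cs L R)
  then show ?case
    by (cases bs) (auto simp: sum.lessThan_Suc_shift trie_lookup_add trie_lookup_scale
        simp del: sum.lessThan_Suc cong: if_cong)
qed

definition bits_set :: "bool list \<Rightarrow> nat set" where
  "bits_set bs = {i. i < length bs \<and> bs ! i}"

lemma finite_bits_set: "finite (bits_set bs)"
  by (simp add: bits_set_def)

lemma bits_set_eq_empty_iff: "bits_set bs = {} \<longleftrightarrow> True \<notin> set bs"
  by (auto simp: bits_set_def in_set_conv_nth)

lemma bits_set_update_False: "i < length bs \<Longrightarrow> bits_set (bs[i := False]) = bits_set bs - {i}"
  by (auto simp: bits_set_def nth_list_update)

lemma bits_set_replicate_True: "bits_set (replicate n True) = {..<n}"
  by (auto simp: bits_set_def)

definition rows_trie ::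
    "(nat \<Rightarrow> nat \<Rightarrow> 'a::comm_semiring_1) \<Rightarrow> nat \<Rightarrow> nat list \<Rightarrow> 'a subset_trie" where
  "rows_trie M n rs = foldr (\<lambda>r. trie_mult_linear (map (M r) [0..<n])) rs (Leaf 1)"

definition per_trie :: "nat \<Rightarrow> (nat \<Rightarrow> nat \<Rightarrow> 'a::comm_semiring_1) \<Rightarrow> 'a" where
  "per_trie n M = trie_lookup (rows_trie M n [0..<n]) (replicate n True)"

lemma trie_lookup_rows_trie:
  assumes "m \<le> n" and "length bs = n"
  shows "trie_lookup (rows_trie M n [n - m..<n]) bs =
    (if card (bits_set bs) = m then per_minor M (n - m) (bits_set bs) else 0)"
  using assms
proof (induction m arbitrary: bs)
  case 0
  then show ?case
    using finite_bits_set[of bs] bits_set_eq_empty_iff[of bs]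
    by (auto simp: rows_trie_def per_minor_empty)
next
  case (Suc m)
  define k where "k = n - Suc m"
  define S where "S = bits_set bs"
  define T where "T = rows_trie M n [Suc k..<n]"
  have k: "[n - Suc m..<n] = k # [Suc k..<n]" "n - m = Suc k"
    using Suc.prems by (auto simp: k_def upt_conv_Cons)
  have "trie_lookup (rows_trie M n [n - Suc m..<n]) bs =
      (\<Sum>i<n. if bs ! i then M k i * trie_lookup T (bs[i := False]) else 0)"
    using Suc.prems k by (simp add: rows_trie_def T_def trie_lookup_mult_linear cong: if_cong)
  also have "\<dots> = (\<Sum>i\<in>S. M k i * trie_lookup T (bs[i := False]))"
    using Suc.prems
    by (simp add: S_def bits_set_def sum.inter_filter[symmetric] Collect_conj_eq lessThan_def)
  also have "\<dots> =
      (\<Sum>i\<in>S. M k i * (if card (S - {i}) = m then per_minor M (Suc k) (S - {i}) else 0))"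
  proof (intro sum.cong refl)
    fix i assume "i \<in> S"
    then have "i < length bs"
      by (simp add: S_def bits_set_def)
    then show "M k i * trie_lookup T (bs[i := False]) =
        M k i * (if card (S - {i}) = m then per_minor M (Suc k) (S - {i}) else 0)"
      using Suc.IH[of "bs[i := False]"] Suc.prems k
      by (simp add: T_def S_def bits_set_update_False)
  qed
  also have "\<dots> = (if card S = Suc m then per_minor M k S else 0)"
    by (rule per_minor_expand_row_if_card) (simp add: S_def finite_bits_set)
  finally show ?case
    by (simp add: k_def S_def)
qed

lemma per_trie_eq_per: "per_trie n M = per n M"
  using trie_lookup_rows_trie[of n n "replicate n True" M]
  by (simp add: per_trie_def per_eq_per_minor bits_set_replicate_True)

definition graph_of_edges :: "(nat \<times> nat) list \<Rightarrow> nat \<Rightarrow> nat \<Rightarrow> bool" where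
  "graph_of_edges es i j \<longleftrightarrow> (i, j) \<in> set es \<or> (j, i) \<in> set es"

lemma simple_graph_of_edges:
  assumes "\<forall>(i, j) \<in> set es. i < n \<and> j < n \<and> i \<noteq> j"
  shows "simple_graph n (graph_of_edges es)"
  using assms unfolding simple_graph_def graph_of_edges_def by blast

definition degree :: "nat \<Rightarrow> (nat \<Rightarrow> nat \<Rightarrow> bool) \<Rightarrow> nat \<Rightarrow> nat" where
  "degree n E i = card {j. j < n \<and> E i j}"

lemma degree_eq_length_filter: "degree n E i = length (filter (E i) [0..<n])"
  by (simp add: degree_def length_filter_conv_card cong: conj_cong)

lemma degree_iso:
  assumes f: "bij_betw f {..<n} {..<n}" and edges: "\<forall>i<n. \<forall>j<n. E i j \<longleftrightarrow> E' (f i) (f j)"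
    and "i < n"
  shows "degree n E' (f i) = degree n E i"
proof -
  have surj: "f ` {..<n} = {..<n}" and inj: "inj_on f {..<n}"
    using f by (auto simp: bij_betw_def)
  have "{j. j < n \<and> E' (f i) j} = f ` {j. j < n \<and> E i j}"
  proof (intro equalityI subsetI)
    fix x assume x: "x \<in> {j. j < n \<and> E' (f i) j}"
    then have "x \<in> f ` {..<n}"
      using surj by simp
    then obtain y where y: "y < n" "x = f y"
      by auto
    then have "E i y"
      using x edges[rule_format, OF \<open>i < n\<close> \<open>y < n\<close>] by simp
    with y show "x \<in> f ` {j. j < n \<and> E i j}"
      by auto
  next
    fix x assume "x \<in> f ` {j. j < n \<and> E i j}"
    then obtain y where y: "y < n" "E i y" "x = f y"
      by auto
    then show "x \<in> {j. j < n \<and> E' (f i) j}"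
      using surj edges[rule_format, OF \<open>i < n\<close> \<open>y < n\<close>] by auto
  qed
  moreover have "inj_on f {j. j < n \<and> E i j}"
    using inj by (rule inj_on_subset) auto
  ultimately show ?thesis
    by (simp add: degree_def card_image)
qed

definition graph1 :: "nat \<Rightarrow> nat \<Rightarrow> bool" where
  "graph1 = graph_of_edges [(0,3), (0,5), (0,6), (0,7), (1,4), (1,5), (1,7),
                            (2,5), (2,6), (2,7), (3,6), (4,6), (5,7), (6,7)]"

definition graph2 :: "nat \<Rightarrow> nat \<Rightarrow> bool" where
  "graph2 = graph_of_edges [(0,3), (0,5), (0,6), (0,7), (1,4), (1,5), (1,6),
                            (2,5), (2,6), (3,6), (3,7), (4,7), (5,6), (5,7)]"

lemma all_less_iff_list_all_upt: "(\<forall>i<n. P i) \<longleftrightarrow> list_all P [0..<n]"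
  by (auto simp: list_all_iff)

lemma ex_less_iff_list_ex_upt: "(\<exists>i<n. P i) \<longleftrightarrow> list_ex P [0..<n]"
  by (auto simp: list_ex_iff)

lemmas graph_eval_simps =
  graph1_def graph2_def graph_of_edges_def degree_eq_length_filter upt_rec
  all_less_iff_list_all_upt ex_less_iff_list_ex_upt

lemma not_graph_iso_graph1_graph2: "\<not> graph_iso 8 graph1 graph2"
proof
  assume "graph_iso 8 graph1 graph2"
  then obtain f where f: "bij_betw f {..<8} {..<8}"
    and edges: "\<forall>i<8. \<forall>j<8. graph1 i j \<longleftrightarrow> graph2 (f i) (f j)"
    unfolding graph_iso_def by blast
  have "2 \<in> f ` {..<8}"
    using f by (simp add: bij_betw_def)
  then obtain u where u: "u < 8" "f u = 2"
    by auto
  have "degree 8 graph2 2 = 2"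
    by (simp add: graph_eval_simps)
  then have "degree 8 graph1 u = 2"
    using degree_iso[OF f edges u(1)] u(2) by simp
  moreover have
    "\<forall>u<8. degree 8 graph1 u = 2 \<longrightarrow> (\<exists>w<8. graph1 u w \<and> degree 8 graph1 w \<noteq> 5)"
    by (simp add: graph_eval_simps)
  ultimately obtain w where w: "w < 8" "graph1 u w" "degree 8 graph1 w \<noteq> 5"
    using u(1) by blast
  have "graph2 2 (f w)" "f w < 8"
    using edges u w f by (auto simp: bij_betw_def)
  moreover have "\<forall>v<8. graph2 2 v \<longrightarrow> degree 8 graph2 v = 5"
    by (simp add: graph_eval_simps)
  ultimately show False
    using degree_iso[OF f edges w(1)] w(3) by simp
qed

lemma perm_poly_graph1_eq_graph2: "perm_poly 8 graph1 = perm_poly 8 graph2"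
  unfolding perm_poly_def per_trie_eq_per[symmetric]
  by (simp add: per_trie_def rows_trie_def graph1_def graph2_def graph_of_edges_def upt_rec
      ind_def var_x_def var_lambda_def one_pCons)

theorem mainTheorem1:
  shows "\<exists>E1 E2. simple_graph 8 E1 \<and> simple_graph 8 E2 \<and> \<not> graph_iso 8 E1 E2
                 \<and> perm_poly 8 E1 = perm_poly 8 E2"
proof (intro exI conjI)
  show "simple_graph 8 graph1" "simple_graph 8 graph2"
    unfolding graph1_def graph2_def by (simp_all add: simple_graph_of_edges)
  show "\<not> graph_iso 8 graph1 graph2"
    by (rule not_graph_iso_graph1_graph2)
  show "perm_poly 8 graph1 = perm_poly 8 graph2"
    by (rule perm_poly_graph1_eq_graph2)
qed

end
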